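(* Let $m\in\mathbb{N}_{>0}$, $(\theta_1,\dots,\theta_m)\in\mathbb{R}_{>0}^m$ and $(q_1,\dots,q_m)\in(0,1)^m$. Let $\{Y_j\}_{j\in\mathbb{N}}$ (with $\mathbb{N}=\{0,1,2,\dots\}$) be independent random variables with values in $\{0,1,\dots,m\}$ such that \[ \mathbb{P}(Y_j=0)=\frac{1}{1+\sum_{\ell=1}^m\theta_\ell q_\ell^j},\qquad \mathbb{P}(Y_j=k)=\frac{\theta_k q_k^j}{1+\sum_{\ell=1}^m\theta_\ell q_\ell^j},\quad k=1,\dots,m, \] and define $X_k:=\sum_{j=0}^{\infty}\mathbf{1}(Y_j=k)$ for $k=1,\dots,m$. Then $(X_1,\dots,X_m)\overset{d}{\sim}\mathrm{He}(\theta_1,\dots,\theta_m;q_1,\dots,q_m)$.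
   Context: Multi-dimensional Heine distribution: for $(\theta_1,\dots,\theta_m)\in\mathbb{R}_{>0}^m$ and $(q_1,\dots,q_m)\in(0,1)^m$, an $\mathbb{N}^m$-valued random variable $(X_1,\dots,X_m)$ has distribution $\mathrm{He}(\theta_1,\dots,\theta_m;q_1,\dots,q_m)$ if for all $(\alpha_1,\dots,\alpha_m)\in\mathbb{N}^m$, \[ \mathbb{P}(X_1=\alpha_1,\dots,X_m=\alpha_m)=\frac{\theta_1^{\alpha_1}\cdots\theta_m^{\alpha_m}\sum_{J_1,\dots,J_m}\prod_{k=1}^m q_k^{\sum_{j\in J_k}j}}{\prod_{j=0}^{\infty}\bigl(1+\sum_{k=1}^m\theta_k q_k^j\bigr)}, \] where the sum runs over all tuples of pairwise disjoint subsets $J_1,\dots,J_m\subseteq\mathbb{N}$ with $|J_k|=\alpha_k$ for each $k$. *)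

theory Defs
  imports "HOL-Probability.Probability"
begin

text \<open>Admissible index tuples (J_1,...,J_m): pairwise disjoint finite subsets of the
  naturals with |J_k| = alpha_k; the tuple is encoded as a function on indices,
  set to the empty set outside {1..m} so that the encoding is unique.\<close>
definition heine_tuples :: "nat \<Rightarrow> (nat \<Rightarrow> nat) \<Rightarrow> (nat \<Rightarrow> nat set) set" where
  "heine_tuples m \<alpha> = {J. (\<forall>k. k \<notin> {1..m} \<longrightarrow> J k = {}) \<and>
      (\<forall>k\<in>{1..m}. finite (J k) \<and> card (J k) = \<alpha> k) \<and>
      (\<forall>k\<in>{1..m}. \<forall>l\<in>{1..m}. k \<noteq> l \<longrightarrow> J k \<inter> J l = {})}"

definition heine_pmf :: "nat \<Rightarrow> (nat \<Rightarrow> real) \<Rightarrow> (nat \<Rightarrow> real) \<Rightarrow> (nat \<Rightarrow> nat) \<Rightarrow> real" where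
  "heine_pmf m \<theta> q \<alpha> =
     (\<Prod>k=1..m. \<theta> k ^ \<alpha> k) *
     (\<Sum>\<^sub>\<infinity>J\<in>heine_tuples m \<alpha>. \<Prod>k=1..m. q k ^ (\<Sum>j\<in>J k. j)) /
     (\<Prod>j. 1 + (\<Sum>k=1..m. \<theta> k * q k ^ j))"

definition has_heine_distribution ::
  "'a measure \<Rightarrow> nat \<Rightarrow> (nat \<Rightarrow> real) \<Rightarrow> (nat \<Rightarrow> real) \<Rightarrow> (nat \<Rightarrow> 'a \<Rightarrow> ennreal) \<Rightarrow> bool" where
  "has_heine_distribution M m \<theta> q X \<longleftrightarrow>
     (\<forall>k\<in>{1..m}. X k \<in> borel_measurable M \<and> (AE \<omega> in M. X k \<omega> < \<infinity>)) \<and>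
     (\<forall>\<alpha>::nat \<Rightarrow> nat. (\<forall>k. k \<notin> {1..m} \<longrightarrow> \<alpha> k = 0) \<longrightarrow>
        measure M {\<omega> \<in> space M. \<forall>k\<in>{1..m}. X k \<omega> = of_nat (\<alpha> k)} = heine_pmf m \<theta> q \<alpha>)"

end

theory Submission
  imports Defs
begin

(* An admissible tuple (J_1,...,J_m) is the same thing as a realisation y of (Y_j) with exactly
   alpha_k entries equal to k: put y_j = k for j in J_k and y_j = 0 otherwise.  By independence
   such a realisation has probability
     prod_k theta_k^alpha_k q_k^(sum J_k) / prod_j (1 + sum_l theta_l q_l^j),
   and the event X = alpha is the countable disjoint union of these realisations.  Finiteness of
   the X_k is Borel-Cantelli, since P(Y_j = k) <= theta_k q_k^j is summable. *)

(* The sum has at most one nonzero term because the J_k are pairwise disjoint. *)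
definition tuple_label :: "nat \<Rightarrow> (nat \<Rightarrow> nat set) \<Rightarrow> nat \<Rightarrow> nat" where
  "tuple_label m J j = (\<Sum>k\<in>{1..m}. if j \<in> J k then k else 0)"

lemma tuple_label_eq_index:
  assumes J: "J \<in> heine_tuples m \<alpha>" and k: "k \<in> {1..m}" and j: "j \<in> J k"
  shows "tuple_label m J j = k"
proof -
  have "\<And>l. l \<in> {1..m} \<Longrightarrow> l \<noteq> k \<Longrightarrow> j \<notin> J l"
    using J k j unfolding heine_tuples_def by blast
  then have "tuple_label m J j = (\<Sum>l\<in>{1..m}. if l = k then k else 0)"
    unfolding tuple_label_def using j by (intro sum.cong) auto
  then show ?thesis
    using k by simp
qed

lemma tuple_label_eq_0:
  assumes "\<forall>k\<in>{1..m}. j \<notin> J k"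
  shows "tuple_label m J j = 0"
  unfolding tuple_label_def using assms by (intro sum.neutral) auto

lemma tuple_label_cases:
  assumes "J \<in> heine_tuples m \<alpha>"
  obtains "tuple_label m J j = 0" "\<forall>k\<in>{1..m}. j \<notin> J k"
    | k where "k \<in> {1..m}" "j \<in> J k" "tuple_label m J j = k"
  using assms tuple_label_eq_0 tuple_label_eq_index by metis

lemma tuple_label_le:
  assumes "J \<in> heine_tuples m \<alpha>"
  shows "tuple_label m J j \<le> m"
  by (cases rule: tuple_label_cases[OF assms, of j]) auto

lemma tuple_label_preimage:
  assumes J: "J \<in> heine_tuples m \<alpha>" and k: "k \<in> {1..m}"
  shows "{j. tuple_label m J j = k} = J k"
proof -
  have "tuple_label m J j = k \<longleftrightarrow> j \<in> J k" for j
    using k tuple_label_eq_index[OF J k, of j] by (cases rule: tuple_label_cases[OF J, of j]) auto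
  then show ?thesis
    by blast
qed

lemma tuple_label_support:
  assumes J: "J \<in> heine_tuples m \<alpha>"
  shows "{j. tuple_label m J j \<noteq> 0} = (\<Union>k\<in>{1..m}. J k)"
proof -
  have "tuple_label m J j \<noteq> 0 \<longleftrightarrow> j \<in> (\<Union>k\<in>{1..m}. J k)" for j
    by (cases rule: tuple_label_cases[OF J, of j]) auto
  then show ?thesis
    by blast
qed

lemma inj_on_tuple_label: "inj_on (tuple_label m) (heine_tuples m \<alpha>)"
proof (rule inj_onI)
  fix J J' assume J: "J \<in> heine_tuples m \<alpha>" and J': "J' \<in> heine_tuples m \<alpha>"
    and eq: "tuple_label m J = tuple_label m J'"
  show "J = J'"
  proof (rule ext)
    fix k
    show "J k = J' k"
    proof (cases "k \<in> {1..m}")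
      case True
      then show ?thesis
        using tuple_label_preimage[OF J True] tuple_label_preimage[OF J' True] by (simp add: eq)
    next
      case False
      then show ?thesis
        using J J' unfolding heine_tuples_def by blast
    qed
  qed
qed

lemma image_tuple_label:
  "tuple_label m ` heine_tuples m \<alpha> =
     {y. (\<forall>j. y j \<le> m) \<and> (\<forall>k\<in>{1..m}. finite {j. y j = k} \<and> card {j. y j = k} = \<alpha> k)}"
  (is "_ = ?Y")
proof
  show "tuple_label m ` heine_tuples m \<alpha> \<subseteq> ?Y"
  proof (rule image_subsetI)
    fix J assume J: "J \<in> heine_tuples m \<alpha>"
    show "tuple_label m J \<in> ?Y"
      using J tuple_label_le[OF J] tuple_label_preimage[OF J] unfolding heine_tuples_def by auto
  qed
next
  show "?Y \<subseteq> tuple_label m ` heine_tuples m \<alpha>"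
  proof
    fix y assume y: "y \<in> ?Y"
    define J where "J k = (if k \<in> {1..m} then {j. y j = k} else {})" for k
    have J: "J \<in> heine_tuples m \<alpha>"
      using y unfolding heine_tuples_def J_def by auto
    have "tuple_label m J j = y j" for j
    proof (cases "y j = 0")
      case True
      then show ?thesis
        using tuple_label_eq_0[of m j J] by (auto simp: J_def)
    next
      case False
      then have "y j \<in> {1..m}"
        using y by (simp add: Suc_leI)
      then show ?thesis
        by (intro tuple_label_eq_index[OF J]) (auto simp: J_def)
    qed
    then show "y \<in> tuple_label m ` heine_tuples m \<alpha>"
      using J by (metis image_eqI ext)
  qed
qed

lemma prod_tuple_label_weights:
  fixes \<theta> q :: "nat \<Rightarrow> 'b::comm_monoid_mult"
  assumes J: "J \<in> heine_tuples m \<alpha>"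
  shows "(\<Prod>j | tuple_label m J j \<noteq> 0. \<theta> (tuple_label m J j) * q (tuple_label m J j) ^ j)
       = (\<Prod>k=1..m. \<theta> k ^ \<alpha> k) * (\<Prod>k=1..m. q k ^ (\<Sum>j\<in>J k. j))"
proof -
  have fin: "\<forall>k\<in>{1..m}. finite (J k)" and card: "\<forall>k\<in>{1..m}. card (J k) = \<alpha> k"
    and disj: "\<forall>k\<in>{1..m}. \<forall>l\<in>{1..m}. k \<noteq> l \<longrightarrow> J k \<inter> J l = {}"
    using J unfolding heine_tuples_def by auto
  have "(\<Prod>j | tuple_label m J j \<noteq> 0. \<theta> (tuple_label m J j) * q (tuple_label m J j) ^ j)
      = (\<Prod>k=1..m. \<Prod>j\<in>J k. \<theta> (tuple_label m J j) * q (tuple_label m J j) ^ j)"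
    unfolding tuple_label_support[OF J] using fin disj by (simp add: prod.UNION_disjoint)
  also have "\<dots> = (\<Prod>k=1..m. \<Prod>j\<in>J k. \<theta> k * q k ^ j)"
    using tuple_label_eq_index[OF J] by (intro prod.cong) auto
  also have "\<dots> = (\<Prod>k=1..m. \<theta> k ^ \<alpha> k * q k ^ (\<Sum>j\<in>J k. j))"
    using card by (intro prod.cong) (simp_all add: prod.distrib power_sum)
  finally show ?thesis
    by (simp add: prod.distrib)
qed

lemma countable_heine_tuples: "countable (heine_tuples m \<alpha>)"
proof -
  let ?extend = "\<lambda>f::nat \<Rightarrow> nat set. \<lambda>k. if k \<in> {1..m} then f k else {}"
  have "heine_tuples m \<alpha> \<subseteq> ?extend ` (Pi\<^sub>E {1..m} (\<lambda>_. Collect finite))"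
  proof
    fix J assume J: "J \<in> heine_tuples m \<alpha>"
    have "J k = ?extend (restrict J {1..m}) k" for k
      using J unfolding heine_tuples_def by (cases "k \<in> {1..m}") auto
    then have "J = ?extend (restrict J {1..m})"
      by (rule ext)
    moreover have "restrict J {1..m} \<in> Pi\<^sub>E {1..m} (\<lambda>_. Collect finite)"
      using J unfolding heine_tuples_def by (simp add: restrict_PiE_iff)
    ultimately show "J \<in> ?extend ` (Pi\<^sub>E {1..m} (\<lambda>_. Collect finite))"
      by blast
  qed
  moreover have "countable (Pi\<^sub>E {1..m} (\<lambda>_. Collect (finite :: nat set \<Rightarrow> bool)))"
    by (rule countable_PiE) (auto intro: countable_Collect_finite)
  ultimately show ?thesis
    by (meson countable_image countable_subset)
qed

lemma suminf_ennreal_indicator: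
  "(\<Sum>j. (if P j then 1 else 0 :: ennreal)) =
     (if finite {j. P j} then of_nat (card {j. P j}) else \<infinity>)"
proof -
  have "(\<lambda>j. if P j then 1 else 0 :: ennreal) = indicator {j. P j}"
    by (auto simp: indicator_def)
  then have "(\<Sum>j. (if P j then 1 else 0 :: ennreal)) = emeasure (count_space UNIV) {j. P j}"
    by (simp add: nn_integral_count_space_nat[symmetric])
  also have "\<dots> = (if finite {j. P j} then of_nat (card {j. P j}) else \<infinity>)"
    by (rule emeasure_count_space) simp
  finally show ?thesis .
qed

lemma convergent_prod_one_plus_nonneg:
  fixes a :: "nat \<Rightarrow> real"
  assumes "\<And>j. a j \<ge> 0" and "summable a"
  shows "convergent_prod (\<lambda>j. 1 + a j)"
proof (rule summable_imp_convergent_prod_real)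
  show "summable (\<lambda>j. \<bar>a j\<bar>)"
    using assms by simp
  show "a j \<noteq> -1" for j
    using assms(1)[of j] by linarith
qed

lemma (in finite_measure) measure_UN_countable_infsum:
  assumes "countable I" and "disjoint_family_on A I" and "\<And>i. i \<in> I \<Longrightarrow> A i \<in> sets M"
  shows "measure M (\<Union>i\<in>I. A i) = (\<Sum>\<^sub>\<infinity>i\<in>I. measure M (A i))"
proof -
  have nn_integral: "(\<integral>\<^sup>+i. ennreal (measure M (A i)) \<partial>count_space I) = ennreal (measure M (\<Union>i\<in>I. A i))"
    using emeasure_UN_countable[of I A M] assms by (simp add: emeasure_eq_measure)
  then have "integrable (count_space I) (\<lambda>i. measure M (A i))"
    by (intro integrableI_nonneg) (auto simp: AE_count_space)
  then have summable: "Infinite_Set_Sum.abs_summable_on (\<lambda>i. measure M (A i)) I"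
    by (simp add: Infinite_Set_Sum.abs_summable_on_def)
  then have "ennreal (measure M (\<Union>i\<in>I. A i)) = ennreal (infsetsum (\<lambda>i. measure M (A i)) I)"
    by (simp add: nn_integral_conv_infsetsum flip: nn_integral)
  moreover have "0 \<le> (\<Sum>\<^sub>\<infinity>i\<in>I. measure M (A i))"
    by (simp add: infsum_nonneg)
  ultimately show ?thesis
    by (simp add: infsetsum_infsum[OF summable])
qed

lemma (in prob_space) indep_vars_prob_all_eq_LIMSEQ:
  assumes indep: "indep_vars (\<lambda>_. count_space UNIV) Y UNIV"
  shows "(\<lambda>n. \<Prod>j<n. prob {\<omega>\<in>space M. Y j \<omega> = y j}) \<longlonglongrightarrow> prob {\<omega>\<in>space M. \<forall>j. Y j \<omega> = y j}"
proof -
  have [measurable]: "Y j \<in> measurable M (count_space UNIV)" for j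
    using indep unfolding indep_vars_def by auto
  define A where "A n = {\<omega>\<in>space M. \<forall>j<n. Y j \<omega> = y j}" for n
  have prob_A: "prob (A n) = (\<Prod>j<n. prob {\<omega>\<in>space M. Y j \<omega> = y j})" for n
  proof (cases "n = 0")
    case True
    then show ?thesis
      by (simp add: A_def prob_space)
  next
    case False
    have "A n = (\<Inter>j\<in>{..<n}. Y j -` {y j} \<inter> space M)"
      using False by (auto simp: A_def)
    also have "prob \<dots> = (\<Prod>j<n. prob (Y j -` {y j} \<inter> space M))"
      using False by (intro indep_varsD[OF indep]) auto
    finally have "prob (A n) = (\<Prod>j<n. prob (Y j -` {y j} \<inter> space M))" .
    then show ?thesis
      by (simp add: vimage_def Int_def conj_commute)
  qed
  have "(\<lambda>n. prob (A n)) \<longlonglongrightarrow> prob (\<Inter>n. A n)"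
    by (rule finite_Lim_measure_decseq) (auto simp: A_def decseq_def)
  moreover have "(\<Inter>n. A n) = {\<omega>\<in>space M. \<forall>j. Y j \<omega> = y j}"
    by (auto simp: A_def)
  ultimately show ?thesis
    by (simp add: prob_A)
qed

locale heine_sequence = prob_space M for M :: "'a measure" +
  fixes m :: nat and \<theta> q :: "nat \<Rightarrow> real" and Y :: "nat \<Rightarrow> 'a \<Rightarrow> nat"
  assumes theta_pos: "\<forall>k\<in>{1..m}. \<theta> k > 0"
    and q_bounds: "\<forall>k\<in>{1..m}. 0 < q k \<and> q k < 1"
    and indep: "indep_vars (\<lambda>_. count_space UNIV) Y UNIV"
    and Y_range: "\<forall>j. \<forall>\<omega>\<in>space M. Y j \<omega> \<in> {0..m}"
    and prob_Y_eq_0: "\<forall>j. prob {\<omega> \<in> space M. Y j \<omega> = 0} = 1 / (1 + (\<Sum>l=1..m. \<theta> l * q l ^ j))"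
    and prob_Y_eq_pos: "\<forall>j. \<forall>k\<in>{1..m}. prob {\<omega> \<in> space M. Y j \<omega> = k}
            = \<theta> k * q k ^ j / (1 + (\<Sum>l=1..m. \<theta> l * q l ^ j))"
begin

abbreviation X :: "nat \<Rightarrow> 'a \<Rightarrow> ennreal" where
  "X k \<omega> \<equiv> \<Sum>j. if Y j \<omega> = k then 1 else 0"

definition normalizer :: "nat \<Rightarrow> real" where
  "normalizer j = 1 + (\<Sum>l=1..m. \<theta> l * q l ^ j)"

lemma Y_measurable[measurable]: "Y j \<in> measurable M (count_space UNIV)"
  using indep unfolding indep_vars_def by auto

lemma prob_Y_eq:
  assumes "y \<le> m"
  shows "prob {\<omega>\<in>space M. Y j \<omega> = y} = (if y = 0 then 1 else \<theta> y * q y ^ j) / normalizer j"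
  using assms prob_Y_eq_0 prob_Y_eq_pos unfolding normalizer_def by auto

lemma sum_weights_nonneg: "0 \<le> (\<Sum>l=1..m. \<theta> l * q l ^ j)"
  using theta_pos q_bounds by (intro sum_nonneg) (simp add: less_imp_le)

lemma normalizer_ge_1: "1 \<le> normalizer j"
  unfolding normalizer_def using sum_weights_nonneg by simp

lemma convergent_prod_normalizer: "convergent_prod normalizer"
proof -
  have "summable (\<lambda>j. \<Sum>l=1..m. \<theta> l * q l ^ j)"
    using q_bounds by (intro summable_sum summable_mult summable_geometric) (simp add: abs_of_pos)
  then show ?thesis
    unfolding normalizer_def[abs_def] using sum_weights_nonneg
    by (intro convergent_prod_one_plus_nonneg)
qed

lemma prob_Y_eq_sequence:
  assumes le: "\<forall>j. y j \<le> m" and fin: "finite {j. y j \<noteq> 0}"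
  shows "prob {\<omega>\<in>space M. \<forall>j. Y j \<omega> = y j}
    = (\<Prod>j | y j \<noteq> 0. \<theta> (y j) * q (y j) ^ j) / (\<Prod>j. normalizer j)"
proof -
  let ?c = "\<Prod>j | y j \<noteq> 0. \<theta> (y j) * q (y j) ^ j"
  obtain N where N: "{j. y j \<noteq> 0} \<subseteq> {..<N}"
    using fin finite_nat_iff_bounded by auto
  have "?c / (\<Prod>j<n. normalizer j) = (\<Prod>j<n. prob {\<omega>\<in>space M. Y j \<omega> = y j})" if "N \<le> n" for n
  proof -
    have "(\<Prod>j<n. if y j = 0 then 1 else \<theta> (y j) * q (y j) ^ j) = ?c"
      using N that by (intro prod.mono_neutral_cong_right) auto
    then show ?thesis
      using le by (simp add: prob_Y_eq prod_dividef)
  qed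
  then have "\<forall>\<^sub>F n in sequentially. ?c / (\<Prod>j<n. normalizer j) = (\<Prod>j<n. prob {\<omega>\<in>space M. Y j \<omega> = y j})"
    by (rule eventually_sequentiallyI)
  moreover have "(\<lambda>n. ?c / (\<Prod>j<n. normalizer j)) \<longlonglongrightarrow> ?c / (\<Prod>j. normalizer j)"
  proof (intro tendsto_divide tendsto_const)
    show "(\<lambda>n. \<Prod>j<n. normalizer j) \<longlonglongrightarrow> (\<Prod>j. normalizer j)"
      using convergent_prod_LIMSEQ[OF convergent_prod_normalizer]
      by (subst LIMSEQ_lessThan_iff_atMost)
    show "(\<Prod>j. normalizer j) \<noteq> 0"
      using normalizer_ge_1 by (intro prodinf_nonzero convergent_prod_normalizer) (metis not_one_le_zero)
  qed
  ultimately have "(\<lambda>n. \<Prod>j<n. prob {\<omega>\<in>space M. Y j \<omega> = y j}) \<longlonglongrightarrow> ?c / (\<Prod>j. normalizer j)"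
    by (rule Lim_transform_eventually[rotated])
  then show ?thesis
    using indep_vars_prob_all_eq_LIMSEQ[OF indep] LIMSEQ_unique by blast
qed

lemma event_X_eq_UN:
  "{\<omega>\<in>space M. \<forall>k\<in>{1..m}. X k \<omega> = of_nat (\<alpha> k)}
     = (\<Union>J\<in>heine_tuples m \<alpha>. {\<omega>\<in>space M. \<forall>j. Y j \<omega> = tuple_label m J j})"
proof -
  have "(\<forall>k\<in>{1..m}. X k \<omega> = of_nat (\<alpha> k)) \<longleftrightarrow> (\<lambda>j. Y j \<omega>) \<in> tuple_label m ` heine_tuples m \<alpha>"
    if "\<omega> \<in> space M" for \<omega>
    using that Y_range unfolding image_tuple_label by (auto simp: suminf_ennreal_indicator)
  then show ?thesis
    by (auto simp: image_iff fun_eq_iff)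
qed

lemma prob_event_X_eq:
  "prob {\<omega>\<in>space M. \<forall>k\<in>{1..m}. X k \<omega> = of_nat (\<alpha> k)} = heine_pmf m \<theta> q \<alpha>"
proof -
  let ?T = "heine_tuples m \<alpha>"
  let ?E = "\<lambda>J. {\<omega>\<in>space M. \<forall>j. Y j \<omega> = tuple_label m J j}"
  let ?w = "\<lambda>J. \<Prod>k=1..m. q k ^ (\<Sum>j\<in>J k. j)"
  have "disjoint_family_on ?E ?T"
    unfolding disjoint_family_on_def
  proof (intro ballI impI)
    fix J J' assume "J \<in> ?T" "J' \<in> ?T" "J \<noteq> J'"
    then have "tuple_label m J \<noteq> tuple_label m J'"
      by (simp add: inj_on_eq_iff[OF inj_on_tuple_label])
    then obtain j where "tuple_label m J j \<noteq> tuple_label m J' j"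
      by (meson ext)
    then show "?E J \<inter> ?E J' = {}"
      by auto
  qed
  then have "prob (\<Union>J\<in>?T. ?E J) = (\<Sum>\<^sub>\<infinity>J\<in>?T. prob (?E J))"
    by (intro measure_UN_countable_infsum countable_heine_tuples) auto
  also have "\<dots> = (\<Sum>\<^sub>\<infinity>J\<in>?T. (\<Prod>k=1..m. \<theta> k ^ \<alpha> k) / (\<Prod>j. normalizer j) * ?w J)"
  proof (rule infsum_cong)
    fix J assume J: "J \<in> ?T"
    have "finite {j. tuple_label m J j \<noteq> 0}"
      using J unfolding tuple_label_support[OF J] heine_tuples_def by auto
    then have "prob (?E J) = (\<Prod>j | tuple_label m J j \<noteq> 0.
        \<theta> (tuple_label m J j) * q (tuple_label m J j) ^ j) / (\<Prod>j. normalizer j)"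
      using tuple_label_le[OF J] by (intro prob_Y_eq_sequence) auto
    then show "prob (?E J) = (\<Prod>k=1..m. \<theta> k ^ \<alpha> k) / (\<Prod>j. normalizer j) * ?w J"
      unfolding prod_tuple_label_weights[OF J] by simp
  qed
  also have "\<dots> = heine_pmf m \<theta> q \<alpha>"
    unfolding infsum_cmult_right' heine_pmf_def normalizer_def by simp
  finally show ?thesis
    by (simp only: event_X_eq_UN)
qed

lemma AE_X_finite:
  assumes k: "k \<in> {1..m}"
  shows "AE \<omega> in M. X k \<omega> < \<infinity>"
proof -
  let ?A = "\<lambda>j. {\<omega>\<in>space M. Y j \<omega> = k}"
  have "summable (\<lambda>j. prob (?A j))"
  proof (rule summable_comparison_test')
    show "summable (\<lambda>j. \<theta> k * q k ^ j)"
      using k q_bounds by (intro summable_mult summable_geometric) (simp add: abs_of_pos)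
    show "norm (prob (?A j)) \<le> \<theta> k * q k ^ j" for j
    proof -
      have "0 < \<theta> k * q k ^ j"
        using k theta_pos q_bounds by simp
      then show ?thesis
        using k normalizer_ge_1[of j] by (simp add: prob_Y_eq divide_le_eq mult_le_cancel_left1)
    qed
  qed
  then have "AE \<omega> in M. eventually (\<lambda>j. \<omega> \<in> space M - ?A j) sequentially"
    by (intro borel_cantelli_AE1) (auto simp: emeasure_eq_measure)
  then show ?thesis
    using AE_space
  proof eventually_elim
    case (elim \<omega>)
    then have "finite {j. Y j \<omega> = k}"
      by (simp add: cofinite_eq_sequentially[symmetric] eventually_cofinite)
    then show ?case
      by (simp add: suminf_ennreal_indicator of_nat_less_top)
  qed
qed

end

theorem mainTheorem1:
  fixes M :: "'a measure" and m :: nat and \<theta> q :: "nat \<Rightarrow> real" and Y :: "nat \<Rightarrow> 'a \<Rightarrow> nat"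
  assumes "prob_space M"
    and "m > 0"
    and "\<forall>k\<in>{1..m}. \<theta> k > 0"
    and "\<forall>k\<in>{1..m}. 0 < q k \<and> q k < 1"
    and "prob_space.indep_vars M (\<lambda>_. count_space UNIV) Y UNIV"
    and "\<forall>j. \<forall>\<omega>\<in>space M. Y j \<omega> \<in> {0..m}"
    and "\<forall>j. measure M {\<omega> \<in> space M. Y j \<omega> = 0} = 1 / (1 + (\<Sum>l=1..m. \<theta> l * q l ^ j))"
    and "\<forall>j. \<forall>k\<in>{1..m}. measure M {\<omega> \<in> space M. Y j \<omega> = k}
            = \<theta> k * q k ^ j / (1 + (\<Sum>l=1..m. \<theta> l * q l ^ j))"
  shows "has_heine_distribution M m \<theta> q
           (\<lambda>k \<omega>. \<Sum>j. (if Y j \<omega> = k then 1 else 0 :: ennreal))"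
proof -
  interpret heine_sequence M m \<theta> q Y
    using assms by (simp add: heine_sequence_def heine_sequence_axioms_def)
  show ?thesis
    unfolding has_heine_distribution_def using AE_X_finite prob_event_X_eq by simp
qed

end
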